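(* For every $\lambda=\sum_{i=1}^r m_i\omega_i\in P^+$, the number of elements of $\mathcal B^r(\lambda)$ (equivalently, the number of families $((\ell_{i,j},\mathbf s_{i,j}))_{1\le i\le j\le r}$ satisfying the defining conditions below) equals $\prod_{i=1}^r\binom{r+1}{i}^{m_i}$.
   Context: $\mathfrak g=\mathfrak{sl}_{r+1}(\mathbb C)$, $\omega_i$ fundamental weights, $P^+=\sum\mathbb N\omega_i$, $x^-_{i,j}=E_{j+1,i}$ for $1\le i\le j\le r$. Let $\mathbf F$ be the set of pairs $(\ell,\mathbf s)$ with $\ell\in\mathbb N$ and $\mathbf s=(\mathbf s(1)\le\dots\le\mathbf s(\ell))\in\mathbb N^\ell$ ($\mathbf s=\emptyset$ if $\ell=0$). For $m\in\mathbb Z$: $\mathbf F(m)=\emptyset$ if $m<0$; for $m\ge0$, $\mathbf F(m)$ consists of $(0,\emptyset)$ and the pairs with $\ell>0$, $\mathbf s(\ell)\le m-\ell$. $\mathbf x^-_{i,j}(\ell,\mathbf s)=\prod_{p=1}^\ell(x^-_{i,j}\otimes t^{\mathbf s(p)})\in U(\mathfrak n^-[t])$. $\mathcal B^r(\lambda)$ is the set of ordered products $\prod_{j=1}^r\prod_{i=1}^j\mathbf x^-_{i,j}(\ell_{i,j},\mathbf s_{i,j})$ (ordered by increasing $j$, then increasing $i$) with $(\ell_{i,j},\mathbf s_{i,j})\in\mathbf F(m_{i,j})$ for all $1\le i\le j\le r$, where $m_{i,j}=m_i+\sum_{s=j+1}^r(\ell_{i+1,s}-\ell_{i,s})$; these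 are distinct PBW monomials. *)

theory Defs
  imports Main
begin

text \<open>An element (l, s) of F is encoded as a sorted (non-decreasing) list s of naturals;
  l is its length. The empty list encodes (0, empty).\<close>

definition Fset :: "int \<Rightarrow> nat list set" where
  "Fset m = (if m < 0 then {} else
     {[]} \<union> {s. s \<noteq> [] \<and> sorted s \<and> int (last s) \<le> m - int (length s)})"

definition mij :: "(nat \<Rightarrow> nat) \<Rightarrow> nat \<Rightarrow> (nat \<times> nat \<Rightarrow> nat list) \<Rightarrow> nat \<Rightarrow> nat \<Rightarrow> int" where
  "mij m r f i j = int (m i)
     + (\<Sum>s\<in>{j+1..r}. int (length (f (i+1, s))) - int (length (f (i, s))))"

definition Bfam :: "nat \<Rightarrow> (nat \<Rightarrow> nat) \<Rightarrow> (nat \<times> nat \<Rightarrow> nat list) set" where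
  "Bfam r m = {f. (\<forall>i j. \<not> (1 \<le> i \<and> i \<le> j \<and> j \<le> r) \<longrightarrow> f (i, j) = [])
      \<and> (\<forall>i j. 1 \<le> i \<longrightarrow> i \<le> j \<longrightarrow> j \<le> r \<longrightarrow> f (i, j) \<in> Fset (mij m r f i j))}"

end

theory Submission
  imports Defs "HOL-Library.FuncSet"
begin

text \<open>Induction on r, removing the last column j = r. Since m(i,r) = m(i), that column is an
  arbitrary tuple (s(i)) with s(i) in F(m(i)), and the remaining columns form an admissible
  family for r - 1 with weights m(i) + |s(i+1)| - |s(i)|. By induction, and because
  c(0) = c(r) = 1 for c(i) = (r choose i), the number of completions telescopes to the product
  of independent factors c(i)^(m(i) - |s(i)|) * c(i-1)^|s(i)|. As F(n) contains exactly
  (n choose l) lists of length l, summing over s(i) gives (c(i) + c(i-1))^m(i), which is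
  (r+1 choose i)^m(i) by Pascal's rule.\<close>

lemma Fset_0: "Fset 0 = {[]}"
  unfolding Fset_def by (auto simp: neq_Nil_conv)

lemma Fset_Suc: "Fset (int (Suc n)) = Cons 0 ` Fset (int n) \<union> map Suc ` Fset (int n)"
proof
  show "Cons 0 ` Fset (int n) \<union> map Suc ` Fset (int n) \<subseteq> Fset (int (Suc n))"
  proof
    fix s assume "s \<in> Cons 0 ` Fset (int n) \<union> map Suc ` Fset (int n)"
    then consider t where "t \<in> Fset (int n)" "s = 0 # t"
      | t where "t \<in> Fset (int n)" "s = map Suc t" by blast
    then show "s \<in> Fset (int (Suc n))"
      by cases (auto simp: Fset_def last_ConsR sorted_map last_map split: list.splits)
  qed
next
  show "Fset (int (Suc n)) \<subseteq> Cons 0 ` Fset (int n) \<union> map Suc ` Fset (int n)"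
  proof
    fix s assume s: "s \<in> Fset (int (Suc n))"
    show "s \<in> Cons 0 ` Fset (int n) \<union> map Suc ` Fset (int n)"
    proof (cases "s = [] \<or> hd s \<noteq> 0")
      case True
      then have pos: "\<forall>x\<in>set s. 0 < x"
        using s by (cases s) (auto simp: Fset_def)
      define t where "t = map (\<lambda>x. x - 1) s"
      have s_eq: "s = map Suc t"
        unfolding t_def using pos by (induct s) auto
      have "t \<in> Fset (int n)"
        using s unfolding s_eq by (auto simp: Fset_def sorted_map last_map)
      then show ?thesis using s_eq by blast
    next
      case False
      then obtain t where s_eq: "s = 0 # t" by (cases s) auto
      have "t \<in> Fset (int n)"
        using s unfolding s_eq by (cases t) (auto simp: Fset_def last_ConsR)
      then show ?thesis using s_eq by blast
    qed
  qed
qed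

lemma finite_Fset: "finite (Fset (int n))"
  by (induction n) (simp_all add: Fset_0 Fset_Suc del: of_nat_Suc)

lemma length_le_of_mem_Fset: "s \<in> Fset (int n) \<Longrightarrow> length s \<le> n"
  by (auto simp: Fset_def)

lemma sum_Fset_binomial:
  fixes a b :: "'a::comm_semiring_1"
  shows "(\<Sum>s\<in>Fset (int n). a ^ (n - length s) * b ^ length s) = (a + b) ^ n"
proof (induction n)
  case 0
  show ?case by (simp add: Fset_0)
next
  case (Suc n)
  let ?F = "Fset (int n)" and ?w = "\<lambda>n s. a ^ (n - length s) * b ^ length s"
  have disjoint: "Cons 0 ` ?F \<inter> map Suc ` ?F = {}"
    by (auto simp: Cons_eq_map_conv)
  have "(\<Sum>s\<in>Fset (int (Suc n)). ?w (Suc n) s)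
      = (\<Sum>s\<in>Cons 0 ` ?F. ?w (Suc n) s) + (\<Sum>s\<in>map Suc ` ?F. ?w (Suc n) s)"
    unfolding Fset_Suc using disjoint by (simp add: finite_Fset sum.union_disjoint)
  also have "\<dots> = b * (\<Sum>s\<in>?F. ?w n s) + a * (\<Sum>s\<in>?F. ?w n s)"
    by (simp add: sum.reindex inj_on_def sum_distrib_left length_le_of_mem_Fset
        Suc_diff_le ac_simps)
  also have "\<dots> = (a + b) ^ Suc n"
    using Suc.IH by (simp add: algebra_simps)
  finally show ?case .
qed

definition add_column :: "nat \<Rightarrow> (nat \<Rightarrow> nat list) \<Rightarrow> (nat \<times> nat \<Rightarrow> nat list) \<Rightarrow> nat \<times> nat \<Rightarrow> nat list"
  where "add_column r col g =
    (\<lambda>(i, j). if j = Suc r then (if 1 \<le> i \<and> i \<le> Suc r then col i else []) else g (i, j))"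

text \<open>The truncated subtraction is exact for the columns that occur, since
  \<open>length (col i) \<le> m i\<close> whenever \<open>col i \<in> Fset (int (m i))\<close>.\<close>

definition residual_weights :: "(nat \<Rightarrow> nat) \<Rightarrow> (nat \<Rightarrow> nat list) \<Rightarrow> nat \<Rightarrow> nat"
  where "residual_weights m col i = m i + length (col (Suc i)) - length (col i)"

abbreviation columns :: "nat \<Rightarrow> (nat \<Rightarrow> nat) \<Rightarrow> (nat \<Rightarrow> nat list) set"
  where "columns r m \<equiv> PiE {1..r} (\<lambda>i. Fset (int (m i)))"

lemma Bfam_0: "Bfam 0 m = {\<lambda>_. []}"
  unfolding Bfam_def by auto

lemma mij_last: "mij m r f i r = int (m i)"
  unfolding mij_def by simp

lemma mij_add_column:
  assumes col: "col \<in> columns (Suc r) m" and "1 \<le> i" "i \<le> j" "j \<le> r"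
  shows "mij m (Suc r) (add_column r col g) i j = mij (residual_weights m col) r g i j"
proof -
  have "length (col i) \<le> m i"
    using col assms by (intro length_le_of_mem_Fset) auto
  moreover have "{Suc j..Suc r} = insert (Suc r) {Suc j..r}"
    using assms by auto
  ultimately show ?thesis
    using assms by (simp add: mij_def add_column_def residual_weights_def)
qed

lemma add_column_mem_Bfam:
  assumes col: "col \<in> columns (Suc r) m" and g: "g \<in> Bfam r (residual_weights m col)"
  shows "add_column r col g \<in> Bfam (Suc r) m"
proof -
  let ?f = "add_column r col g"
  have "?f (i, j) \<in> Fset (mij m (Suc r) ?f i j)"
    if "1 \<le> i" "i \<le> j" "j \<le> Suc r" for i j
  proof (cases "j = Suc r")
    case True
    then show ?thesis
      using col that by (auto simp: mij_last add_column_def)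
  next
    case False
    then show ?thesis
      using g that mij_add_column[OF col, of i j g] by (auto simp: Bfam_def add_column_def)
  qed
  moreover have "?f (i, j) = []" if "\<not> (1 \<le> i \<and> i \<le> j \<and> j \<le> Suc r)" for i j
    using g that by (auto simp: Bfam_def add_column_def)
  ultimately show ?thesis
    unfolding Bfam_def by blast
qed

lemma Bfam_Suc_split:
  assumes f: "f \<in> Bfam (Suc r) m"
  obtains col g where "col \<in> columns (Suc r) m" "g \<in> Bfam r (residual_weights m col)"
    "f = add_column r col g"
proof
  define col where "col = restrict (\<lambda>i. f (i, Suc r)) {1..Suc r}"
  define g where "g = (\<lambda>(i, j). if j = Suc r then [] else f (i, j))"
  have outside: "f (i, j) = []" if "\<not> (1 \<le> i \<and> i \<le> j \<and> j \<le> Suc r)" for i j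
    using f that unfolding Bfam_def by blast
  have inside: "f (i, j) \<in> Fset (mij m (Suc r) f i j)" if "1 \<le> i" "i \<le> j" "j \<le> Suc r" for i j
    using f that unfolding Bfam_def by blast
  show f_eq: "f = add_column r col g"
    using outside by (auto simp: fun_eq_iff add_column_def col_def g_def)
  show col: "col \<in> columns (Suc r) m"
    using inside[of _ "Suc r"] by (auto simp: col_def mij_last)
  have "g (i, j) \<in> Fset (mij (residual_weights m col) r g i j)"
    if "1 \<le> i" "i \<le> j" "j \<le> r" for i j
  proof -
    have "mij m (Suc r) f i j = mij (residual_weights m col) r g i j"
      using mij_add_column[OF col that, of g] f_eq by simp
    moreover have "g (i, j) = f (i, j)"
      using that by (simp add: g_def)
    ultimately show ?thesis
      using inside[OF that(1,2)] that(3) by simp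
  qed
  moreover have "g (i, j) = []" if "\<not> (1 \<le> i \<and> i \<le> j \<and> j \<le> r)" for i j
    using outside[of i j] that by (auto simp: g_def)
  ultimately show "g \<in> Bfam r (residual_weights m col)"
    unfolding Bfam_def by blast
qed

lemma Bfam_Suc:
  "Bfam (Suc r) m = (\<lambda>(col, g). add_column r col g) `
     (SIGMA col:columns (Suc r) m. Bfam r (residual_weights m col))"
  by (auto simp: add_column_mem_Bfam elim!: Bfam_Suc_split)

lemma inj_on_add_column:
  "inj_on (\<lambda>(col, g). add_column r col g) (SIGMA col:columns (Suc r) m. Bfam r (residual_weights m col))"
proof (rule inj_onI, clarify)
  fix col g col' g'
  assume eq: "add_column r col g = add_column r col' g'"
    and mem: "col \<in> columns (Suc r) m" "g \<in> Bfam r (residual_weights m col)"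
      "col' \<in> columns (Suc r) m" "g' \<in> Bfam r (residual_weights m col')"
  have "col = col'"
  proof (rule extensionalityI)
    show "col \<in> extensional {1..Suc r}" "col' \<in> extensional {1..Suc r}"
      using mem by (auto simp: PiE_iff)
  next
    fix i assume "i \<in> {1..Suc r}"
    then show "col i = col' i"
      using fun_cong[OF eq, of "(i, Suc r)"] by (simp add: add_column_def)
  qed
  moreover have "g (i, j) = g' (i, j)" for i j
    using fun_cong[OF eq, of "(i, j)"] mem by (auto simp: add_column_def Bfam_def split: if_splits)
  ultimately show "col = col' \<and> g = g'"
    by auto

qed

lemma finite_Bfam: "finite (Bfam r m)"
proof (induction r arbitrary: m)
  case 0
  show ?case by (simp add: Bfam_0)
next
  case (Suc r)
  then show ?case
    unfolding Bfam_Suc by (intro finite_imageI finite_SigmaI finite_PiE) (simp_all add: finite_Fset)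
qed

lemma card_Bfam_Suc:
  "card (Bfam (Suc r) m) = (\<Sum>col\<in>columns (Suc r) m. card (Bfam r (residual_weights m col)))"
  unfolding Bfam_Suc card_image[OF inj_on_add_column]
  by (simp add: card_SigmaI finite_PiE finite_Fset finite_Bfam)

lemma prod_power_shift:
  fixes c :: "nat \<Rightarrow> 'a::comm_monoid_mult"
  assumes "c 0 = 1" "c (Suc r) = 1" and le: "\<And>i. i \<in> {1..r} \<Longrightarrow> l i \<le> m i"
  shows "(\<Prod>i=1..r. c i ^ (m i + l (Suc i) - l i))
       = (\<Prod>i=1..Suc r. c i ^ (m i - l i) * c (i - 1) ^ l i)"
proof -
  have "(\<Prod>i=1..Suc r. c (i - 1) ^ l i) = (\<Prod>i=0..r. c i ^ l (Suc i))"
    using prod.shift_bounds_cl_Suc_ivl[of "\<lambda>i. c (i - 1) ^ l i" 0 r] by simp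
  also have "\<dots> = (\<Prod>i=1..r. c i ^ l (Suc i))"
    using \<open>c 0 = 1\<close> by (simp add: prod.atLeast_Suc_atMost)
  finally have "(\<Prod>i=1..Suc r. c i ^ (m i - l i) * c (i - 1) ^ l i)
      = (\<Prod>i=1..r. c i ^ (m i - l i)) * (\<Prod>i=1..r. c i ^ l (Suc i))"
    using \<open>c (Suc r) = 1\<close> by (simp add: prod.distrib)
  also have "\<dots> = (\<Prod>i=1..r. c i ^ (m i + l (Suc i) - l i))"
    using le by (simp add: prod.distrib[symmetric] power_add[symmetric])
  finally show ?thesis ..
qed

lemma sum_columns_prod_power:
  fixes c :: "nat \<Rightarrow> 'a::comm_semiring_1"
  assumes "c 0 = 1" "c (Suc r) = 1"
  shows "(\<Sum>col\<in>columns (Suc r) m. \<Prod>i=1..r. c i ^ residual_weights m col i)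
       = (\<Prod>i=1..Suc r. (c i + c (i - 1)) ^ m i)"
proof -
  let ?w = "\<lambda>i s. c i ^ (m i - length s) * c (i - 1) ^ length s"
  have "(\<Sum>col\<in>columns (Suc r) m. \<Prod>i=1..r. c i ^ residual_weights m col i)
      = (\<Sum>col\<in>columns (Suc r) m. \<Prod>i=1..Suc r. ?w i (col i))"
    unfolding residual_weights_def
    by (intro sum.cong refl prod_power_shift assms) (auto intro: length_le_of_mem_Fset)
  also have "\<dots> = (\<Prod>i=1..Suc r. \<Sum>s\<in>Fset (int (m i)). ?w i s)"
    by (rule prod_sum_PiE[symmetric]) (simp_all add: finite_Fset)
  also have "\<dots> = (\<Prod>i=1..Suc r. (c i + c (i - 1)) ^ m i)"
    by (simp add: sum_Fset_binomial)
  finally show ?thesis .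
qed

theorem proposition2p1:
  fixes r :: nat and m :: "nat \<Rightarrow> nat"
  shows "card (Bfam r m) = (\<Prod>i=1..r. ((r + 1) choose i) ^ (m i))"
proof (induction r arbitrary: m)
  case 0
  show ?case by (simp add: Bfam_0)
next
  case (Suc r)
  have "card (Bfam (Suc r) m)
      = (\<Sum>col\<in>columns (Suc r) m. \<Prod>i=1..r. (Suc r choose i) ^ residual_weights m col i)"
    by (simp add: card_Bfam_Suc Suc.IH)
  also have "\<dots> = (\<Prod>i=1..Suc r. ((Suc r choose i) + (Suc r choose (i - 1))) ^ m i)"
    by (rule sum_columns_prod_power) simp_all
  also have "\<dots> = (\<Prod>i=1..Suc r. (Suc (Suc r) choose i) ^ m i)"
    by (intro prod.cong refl) (auto simp: Suc_le_eq gr0_conv_Suc ac_simps)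
  finally show ?case by simp
qed

end
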